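(* Let $\widehat{\mathscr{O}}$ be a commutative local principal ideal ring, complete with respect to its maximal ideal $\mathfrak{m}=(\pi)$, whose residue field $k$ has characteristic different from $2$. Let $A\in \mathrm{GL}_n(\widehat{\mathscr{O}})$ be cyclic, i.e. its reduction $\overline{A}\in\mathrm{M}_n(k)$ is a cyclic matrix. For $i\ge1$ let $\mathscr{O}_i=\widehat{\mathscr{O}}/\pi^i\widehat{\mathscr{O}}$ and let $A_i$ be the image of $A$ in $\mathrm{M}_n(\mathscr{O}_i)$. Then for every $j\in\mathbb N$, the null ideal $N^{\mathscr{O}_{j+1}}_{A_{j+1}}=\{G\in\mathscr{O}_{j+1}[t]:G(A_{j+1})=0\}$ is principal, generated by the characteristic polynomial $\chi(A_{j+1})(t)$ of $A_{j+1}$ (which is the reduction of the characteristic polynomial $\chi(A)(t)$ of $A$); moreover, $\chi(A_{j+1})(t)=\mathrm{Min}_{\mathscr{O}_{j+1},A_{j+1}}(t)$, i.e. $\chi(A_{j+1})(t)$ is the monic polynomial of least degree in $\mathscr{O}_{j+1}[t]$ annihilating $A_{j+1}$.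
   Context: A matrix $X\in\mathrm{M}_n(k)$ over a field is cyclic if $k^n$, viewed as a $k[t]$-module via $X$, is a cyclic module. A matrix over $\widehat{\mathscr O}$ is called cyclic if its reduction modulo $\mathfrak m$ is cyclic. $\mathrm{Min}_{\mathscr R,X}$ denotes the minimal (least-degree monic) annihilating polynomial of $X$ over $\mathscr R$. *)

theory Defs
  imports "Jordan_Normal_Form.Char_Poly"
begin

text \<open>All objects over the quotients O/(pi^i) and over the residue field k = O/(pi) are
  represented by lifts to O; equality in O/(pi^i) is divisibility of the difference by pi^i.\<close>

definition is_ideal :: "'a :: comm_ring_1 set \<Rightarrow> bool" where
  "is_ideal I \<longleftrightarrow> 0 \<in> I \<and> (\<forall>x\<in>I. \<forall>y\<in>I. x + y \<in> I) \<and> (\<forall>r. \<forall>x\<in>I. r * x \<in> I)"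

definition principal_ideal_ring :: "'a :: comm_ring_1 itself \<Rightarrow> bool" where
  "principal_ideal_ring _ \<longleftrightarrow> (\<forall>I :: 'a set. is_ideal I \<longrightarrow> (\<exists>a. I = {a * x | x. True}))"

text \<open>Local ring whose (unique) maximal ideal is (pi): pi is a non-unit and every
  non-unit lies in (pi), i.e. the non-units form exactly the ideal (pi).\<close>
definition local_with_max_ideal :: "'a :: comm_ring_1 \<Rightarrow> bool" where
  "local_with_max_ideal \<pi> \<longleftrightarrow> \<not> \<pi> dvd 1 \<and> (\<forall>x. \<not> x dvd 1 \<longrightarrow> \<pi> dvd x)"

definition adically_complete :: "'a :: comm_ring_1 \<Rightarrow> bool" where
  "adically_complete \<pi> \<longleftrightarrow>
     (\<forall>x :: nat \<Rightarrow> 'a.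
        (\<forall>k. \<exists>N. \<forall>m\<ge>N. \<forall>l\<ge>N. \<pi> ^ k dvd (x m - x l)) \<longrightarrow>
        (\<exists>y. \<forall>k. \<exists>N. \<forall>m\<ge>N. \<pi> ^ k dvd (y - x m)))"

definition poly_mat_eval :: "'a :: comm_ring_1 poly \<Rightarrow> 'a mat \<Rightarrow> 'a mat" where
  "poly_mat_eval p A = mat (dim_row A) (dim_col A)
     (\<lambda>(i, j). \<Sum>k\<le>degree p. coeff p k * (A ^\<^sub>m k) $$ (i, j))"

definition mat_cong :: "'a :: comm_ring_1 \<Rightarrow> 'a mat \<Rightarrow> 'a mat \<Rightarrow> bool" where
  "mat_cong q M N \<longleftrightarrow> dim_row M = dim_row N \<and> dim_col M = dim_col N \<and>
     (\<forall>i<dim_row M. \<forall>j<dim_col M. q dvd (M $$ (i, j) - N $$ (i, j)))"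

definition poly_cong :: "'a :: comm_ring_1 \<Rightarrow> 'a poly \<Rightarrow> 'a poly \<Rightarrow> bool" where
  "poly_cong q p r \<longleftrightarrow> (\<forall>i. q dvd (coeff p i - coeff r i))"

definition annihilates_mod :: "'a :: comm_ring_1 \<Rightarrow> 'a poly \<Rightarrow> 'a mat \<Rightarrow> bool" where
  "annihilates_mod q G A \<longleftrightarrow> mat_cong q (poly_mat_eval G A) (0\<^sub>m (dim_row A) (dim_col A))"

text \<open>The reduction of A mod pi (a matrix over the residue field k) is cyclic: k^n, viewed as a
  k[t]-module via the reduced matrix, is generated by (the reduction of) a single vector v.\<close>
definition cyclic_mod :: "'a :: comm_ring_1 \<Rightarrow> 'a mat \<Rightarrow> bool" where
  "cyclic_mod \<pi> A \<longleftrightarrow> (\<exists>v \<in> carrier_vec (dim_row A). \<forall>w \<in> carrier_vec (dim_row A).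
      \<exists>p. \<forall>i<dim_row A. \<pi> dvd ((poly_mat_eval p A *\<^sub>v v) $ i - w $ i))"

end

theory Submission
  imports Defs
begin

text \<open>The Cayley-Hamilton theorem, proved over an arbitrary commutative ring via the adjugate of
  \<open>tI - A\<close>, shows that \<open>\<chi> = char_poly A\<close> annihilates \<open>A\<close> and hence its reduction modulo
  any \<open>q\<close>. Conversely, divide an annihilator \<open>G\<close> by the monic \<open>\<chi>\<close>: the remainder \<open>R\<close> has
  degree \<open>< n\<close> and still annihilates \<open>A\<close> modulo \<open>q\<close>. If \<open>v\<close> reduces to a cyclic vector,
  then \<open>R(A) v = K c\<close>, where \<open>K\<close> is the Krylov matrix with columns \<open>v, Av, \<dots>, A\<^sup>n\<^sup>-\<^sup>1 v\<close>
  and \<open>c\<close> is the coefficient vector of \<open>R\<close>. Cyclicity yields \<open>C\<close> with \<open>K C \<equiv> 1 (mod \<pi>)\<close>, so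
  \<open>det K\<close> is a unit of the local ring and \<open>R(A) \<equiv> 0 (mod q)\<close> forces \<open>c \<equiv> 0 (mod q)\<close>.

  The argument works for every modulus \<open>q\<close> (every non-unit one for the degree bound).\<close>

lemma poly_mat_eval_carrier [simp]:
  "A \<in> carrier_mat n n \<Longrightarrow> poly_mat_eval p A \<in> carrier_mat n n"
  unfolding poly_mat_eval_def by simp

lemma dim_poly_mat_eval [simp]:
  "dim_row (poly_mat_eval p A) = dim_row A" "dim_col (poly_mat_eval p A) = dim_col A"
  unfolding poly_mat_eval_def by simp_all

lemma poly_mat_eval_index:
  assumes A: "A \<in> carrier_mat n n" and ij: "i < n" "j < n" and N: "\<forall>k\<ge>N. coeff p k = 0"
  shows "poly_mat_eval p A $$ (i, j) = (\<Sum>k<N. coeff p k * (A ^\<^sub>m k) $$ (i, j))"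
proof -
  let ?f = "\<lambda>k. coeff p k * (A ^\<^sub>m k) $$ (i, j)"
  have "poly_mat_eval p A $$ (i, j) = (\<Sum>k\<le>degree p. ?f k)"
    using A ij unfolding poly_mat_eval_def by simp
  also have "\<dots> = (\<Sum>k<max N (Suc (degree p)). ?f k)"
    by (rule sum.mono_neutral_left) (auto simp: coeff_eq_0)
  also have "\<dots> = (\<Sum>k<N. ?f k)"
    by (rule sum.mono_neutral_right) (use N in auto)
  finally show ?thesis .
qed

lemma poly_mat_eval_0 [simp]:
  "A \<in> carrier_mat n n \<Longrightarrow> poly_mat_eval 0 A = 0\<^sub>m n n"
  by (rule eq_matI) (auto simp: poly_mat_eval_def)

lemma poly_mat_eval_add:
  assumes A: "A \<in> carrier_mat n n"
  shows "poly_mat_eval (p + q) A = poly_mat_eval p A + poly_mat_eval q A"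
proof -
  define N where "N = Suc (degree p + degree q)"
  have N: "\<forall>k\<ge>N. coeff p k = 0" "\<forall>k\<ge>N. coeff q k = 0" "\<forall>k\<ge>N. coeff (p + q) k = 0"
    by (auto simp: N_def coeff_eq_0)
  have "poly_mat_eval (p + q) A $$ (i, j) = poly_mat_eval p A $$ (i, j) + poly_mat_eval q A $$ (i, j)"
    if ij: "i < n" "j < n" for i j
    unfolding poly_mat_eval_index[OF A ij N(1)] poly_mat_eval_index[OF A ij N(2)]
      poly_mat_eval_index[OF A ij N(3)]
    by (simp add: sum.distrib algebra_simps)
  with A show ?thesis by (intro eq_matI) auto
qed

lemma poly_mat_eval_smult:
  assumes A: "A \<in> carrier_mat n n"
  shows "poly_mat_eval (Polynomial.smult c p) A = c \<cdot>\<^sub>m poly_mat_eval p A"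
proof -
  define N where "N = Suc (degree p)"
  have N: "\<forall>k\<ge>N. coeff p k = 0" "\<forall>k\<ge>N. coeff (Polynomial.smult c p) k = 0"
    by (auto simp: N_def coeff_eq_0)
  have "poly_mat_eval (Polynomial.smult c p) A $$ (i, j) = c * poly_mat_eval p A $$ (i, j)"
    if ij: "i < n" "j < n" for i j
    unfolding poly_mat_eval_index[OF A ij N(1)] poly_mat_eval_index[OF A ij N(2)]
    by (simp add: sum_distrib_left mult.assoc)
  with A show ?thesis by (intro eq_matI) auto
qed

lemma poly_mat_eval_pCons:
  assumes A: "A \<in> carrier_mat n n"
  shows "poly_mat_eval (pCons a p) A = a \<cdot>\<^sub>m 1\<^sub>m n + poly_mat_eval p A * A"
proof -
  define N where "N = Suc (degree p)"
  have N: "\<forall>k\<ge>N. coeff p k = 0" and N': "\<forall>k\<ge>Suc N. coeff (pCons a p) k = 0"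
    by (auto simp: N_def coeff_eq_0 coeff_pCons split: nat.split)
  have "poly_mat_eval (pCons a p) A $$ (i, j) = a * 1\<^sub>m n $$ (i, j) + (poly_mat_eval p A * A) $$ (i, j)"
    if ij: "i < n" "j < n" for i j
  proof -
    have "poly_mat_eval (pCons a p) A $$ (i, j)
        = a * 1\<^sub>m n $$ (i, j) + (\<Sum>k<N. coeff p k * (A ^\<^sub>m Suc k) $$ (i, j))"
      unfolding poly_mat_eval_index[OF A ij N'] sum.lessThan_Suc_shift using A ij by simp
    also have "(\<Sum>k<N. coeff p k * (A ^\<^sub>m Suc k) $$ (i, j))
        = (\<Sum>l<n. (\<Sum>k<N. coeff p k * (A ^\<^sub>m k) $$ (i, l)) * A $$ (l, j))"
      using A ij by (simp add: scalar_prod_def atLeast0LessThan sum_distrib_left sum_distrib_right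
          mult.assoc sum.swap[of _ "{..<N}"])
    also have "\<dots> = (\<Sum>l<n. poly_mat_eval p A $$ (i, l) * A $$ (l, j))"
      by (intro sum.cong refl) (simp add: poly_mat_eval_index[OF A ij(1) _ N])
    also have "\<dots> = (poly_mat_eval p A * A) $$ (i, j)"
      using A ij by (simp add: scalar_prod_def atLeast0LessThan)
    finally show ?thesis .
  qed
  with A show ?thesis by (intro eq_matI) auto
qed

lemma poly_mat_eval_mult:
  assumes A: "A \<in> carrier_mat n n"
  shows "poly_mat_eval (p * q) A = poly_mat_eval p A * poly_mat_eval q A"
proof (induction q)
  case 0
  with A show ?case by (simp add: right_mult_zero_mat[OF poly_mat_eval_carrier[OF A]])
next
  case (pCons a q)
  let ?P = "poly_mat_eval p A" and ?Q = "poly_mat_eval q A"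
  have P: "?P \<in> carrier_mat n n" and Q: "?Q \<in> carrier_mat n n"
    using A by simp_all
  have QA: "?Q * A \<in> carrier_mat n n" and PQA: "?P * ?Q * A \<in> carrier_mat n n"
    using P Q A by (metis mult_carrier_mat)+
  have zero: "0 \<cdot>\<^sub>m 1\<^sub>m n = (0\<^sub>m n n :: 'a mat)"
    by (rule eq_matI) auto
  have "poly_mat_eval (p * pCons a q) A = poly_mat_eval (Polynomial.smult a p + pCons 0 (p * q)) A"
    by simp
  also have "\<dots> = a \<cdot>\<^sub>m ?P + ?P * ?Q * A"
    using A pCons.IH PQA zero by (simp add: poly_mat_eval_add poly_mat_eval_smult poly_mat_eval_pCons)
  also have "\<dots> = ?P * (a \<cdot>\<^sub>m 1\<^sub>m n + ?Q * A)"
    using P by (simp add: mult_add_distrib_mat[OF P _ QA] mult_smult_distrib[OF P one_carrier_mat]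
        right_mult_one_mat[OF P] assoc_mult_mat[OF P Q A])
  also have "\<dots> = ?P * poly_mat_eval (pCons a q) A"
    using A by (simp add: poly_mat_eval_pCons)
  finally show ?case .
qed

section \<open>The Cayley-Hamilton theorem\<close>

definition coeff_mat :: "'a :: zero poly mat \<Rightarrow> nat \<Rightarrow> 'a mat" where
  "coeff_mat P k = map_mat (\<lambda>p. coeff p k) P"

lemma dim_coeff_mat [simp]:
  "dim_row (coeff_mat P k) = dim_row P" "dim_col (coeff_mat P k) = dim_col P"
  unfolding coeff_mat_def by simp_all

lemma coeff_mat_smult_one: "coeff_mat (c \<cdot>\<^sub>m 1\<^sub>m n) k = coeff c k \<cdot>\<^sub>m 1\<^sub>m n"
  unfolding coeff_mat_def by (rule eq_matI) auto

lemma coeff_mat_pCons_0: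
  "coeff_mat (map_mat (pCons 0) P) 0 = 0\<^sub>m (dim_row P) (dim_col P)"
  "coeff_mat (map_mat (pCons 0) P) (Suc k) = coeff_mat P k"
  unfolding coeff_mat_def by (auto intro!: eq_matI)

lemma char_poly_matrix_mult_index:
  assumes A: "A \<in> carrier_mat n n" and P: "P \<in> carrier_mat n m" and i: "i < n" and j: "j < m"
  shows "(char_poly_matrix A * P) $$ (i, j)
    = pCons 0 (P $$ (i, j)) - (\<Sum>l<n. Polynomial.smult (A $$ (i, l)) (P $$ (l, j)))"
proof -
  have "(char_poly_matrix A * P) $$ (i, j) = (\<Sum>l<n. char_poly_matrix A $$ (i, l) * P $$ (l, j))"
    using carrier_matD[OF char_poly_matrix_closed[OF A]] carrier_matD[OF P] i j
    by (simp add: scalar_prod_def atLeast0LessThan)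
  also have "\<dots> = (\<Sum>l<n. (if i = l then pCons 0 (P $$ (l, j)) else 0)
      - Polynomial.smult (A $$ (i, l)) (P $$ (l, j)))"
    by (intro sum.cong refl) (use A i in \<open>auto simp: char_poly_matrix_def\<close>)
  finally show ?thesis
    using i by (simp add: sum_subtractf)
qed

lemma coeff_mat_char_poly_matrix_mult:
  assumes A: "A \<in> carrier_mat n n" and P: "P \<in> carrier_mat n m"
  shows "coeff_mat (char_poly_matrix A * P) k = coeff_mat (map_mat (pCons 0) P) k - A * coeff_mat P k"
proof (rule eq_matI)
  fix i j assume "i < dim_row (coeff_mat (map_mat (pCons 0) P) k - A * coeff_mat P k)"
    and "j < dim_col (coeff_mat (map_mat (pCons 0) P) k - A * coeff_mat P k)"
  then have i: "i < n" and j: "j < m"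
    using A P by auto
  have "coeff_mat (char_poly_matrix A * P) k $$ (i, j) = coeff ((char_poly_matrix A * P) $$ (i, j)) k"
    using carrier_matD[OF char_poly_matrix_closed[OF A]] carrier_matD[OF P] i j
    by (simp add: coeff_mat_def)
  also have "\<dots> = (coeff_mat (map_mat (pCons 0) P) k - A * coeff_mat P k) $$ (i, j)"
    unfolding char_poly_matrix_mult_index[OF A P i j] using A P i j
    by (simp add: coeff_mat_def scalar_prod_def atLeast0LessThan coeff_sum)
  finally show "coeff_mat (char_poly_matrix A * P) k $$ (i, j)
      = (coeff_mat (map_mat (pCons 0) P) k - A * coeff_mat P k) $$ (i, j)" .
qed (use carrier_matD[OF char_poly_matrix_closed[OF A]] A P in \<open>auto simp: coeff_mat_def\<close>)

text \<open>Write \<open>P = (\<Sum>k. P\<^sub>k t\<^sup>k)\<close>, so that \<open>coeff_mat (map_mat (pCons 0) P) k\<close> is \<open>P\<^sub>k\<^sub>-\<^sub>1\<close>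
  (and \<open>0\<close> for \<open>k = 0\<close>). Comparing coefficients in \<open>(tI - A) P = c I\<close> gives
  \<open>P\<^sub>k\<^sub>-\<^sub>1 - A P\<^sub>k = c\<^sub>k I\<close>; multiplied by \<open>A\<^sup>k\<close>, the sum \<open>\<Sum> c\<^sub>k A\<^sup>k\<close> telescopes.\<close>

lemma char_poly_matrix_mult_telescope:
  assumes A: "A \<in> carrier_mat n n" and P: "P \<in> carrier_mat n n"
    and AP: "char_poly_matrix A * P = c \<cdot>\<^sub>m 1\<^sub>m n"
  defines "S k \<equiv> A ^\<^sub>m k * coeff_mat (map_mat (pCons 0) P) k"
  shows "coeff c k \<cdot>\<^sub>m A ^\<^sub>m k = S k - S (Suc k)"
proof -
  let ?A = "A ^\<^sub>m k" and ?C = "coeff_mat P k" and ?C' = "coeff_mat (map_mat (pCons 0) P) k"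
  have Ak: "?A \<in> carrier_mat n n" and C: "?C \<in> carrier_mat n n" and C': "?C' \<in> carrier_mat n n"
    using A P by (auto simp: coeff_mat_def)
  have coeffs: "?C' - A * ?C = coeff c k \<cdot>\<^sub>m 1\<^sub>m n"
    using coeff_mat_char_poly_matrix_mult[OF A P, of k] by (simp add: AP coeff_mat_smult_one)
  have "coeff c k \<cdot>\<^sub>m ?A = ?A * (coeff c k \<cdot>\<^sub>m 1\<^sub>m n)"
    by (simp add: mult_smult_distrib[OF Ak one_carrier_mat] right_mult_one_mat[OF Ak])
  also have "\<dots> = ?A * ?C' - ?A * A * ?C"
    using A C by (simp add: coeffs[symmetric] mult_minus_distrib_mat[OF Ak C'] assoc_mult_mat[OF Ak A C])
  also have "\<dots> = S k - S (Suc k)"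
    by (simp add: S_def coeff_mat_pCons_0)
  finally show ?thesis .
qed

theorem cayley_hamilton:
  assumes A: "A \<in> carrier_mat n n"
  shows "poly_mat_eval (char_poly A) A = 0\<^sub>m n n"
proof -
  define B where "B = adj_mat (char_poly_matrix A)"
  define S where "S k = A ^\<^sub>m k * coeff_mat (map_mat (pCons 0) B) k" for k
  have B: "B \<in> carrier_mat n n"
    unfolding B_def using adj_mat(1)[OF char_poly_matrix_closed[OF A]] .
  have S: "S k \<in> carrier_mat n n" for k
    unfolding S_def using A B by (intro mult_carrier_mat[of _ n n]) (auto simp: coeff_mat_def)
  have telescope: "coeff (char_poly A) k \<cdot>\<^sub>m A ^\<^sub>m k = S k - S (Suc k)" for k
    unfolding S_def using adj_mat(2)[OF char_poly_matrix_closed[OF A]]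
    by (intro char_poly_matrix_mult_telescope[OF A B]) (simp add: B_def char_poly_def)
  obtain N where N: "\<forall>p \<in> insert (char_poly A) (elements_mat B). degree p < N"
    using finite_nat_set_iff_bounded[of "degree ` insert (char_poly A) (elements_mat B)"]
    by (auto simp: elements_mat_def)
  then have \<chi>N: "\<forall>k\<ge>Suc N. coeff (char_poly A) k = 0"
    by (auto simp: coeff_eq_0)
  have S_0: "S 0 = 0\<^sub>m n n"
    using A B by (simp add: S_def coeff_mat_pCons_0)
  have "coeff_mat B N = 0\<^sub>m n n"
    using B N by (intro eq_matI) (auto simp: coeff_mat_def coeff_eq_0 elements_matI)
  then have S_N: "S (Suc N) = 0\<^sub>m n n"
    using A by (simp add: S_def coeff_mat_pCons_0)
  have "poly_mat_eval (char_poly A) A $$ (i, j) = 0" if ij: "i < n" "j < n" for i j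
  proof -
    have "poly_mat_eval (char_poly A) A $$ (i, j) = (\<Sum>k<Suc N. (S k - S (Suc k)) $$ (i, j))"
      unfolding poly_mat_eval_index[OF A ij \<chi>N]
      by (intro sum.cong refl) (use A ij in \<open>simp flip: telescope\<close>)
    also have "\<dots> = (\<Sum>k<Suc N. S k $$ (i, j) - S (Suc k) $$ (i, j))"
      by (intro sum.cong refl) (use ij carrier_matD[OF S] in simp)
    also have "\<dots> = S 0 $$ (i, j) - S (Suc N) $$ (i, j)"
      by (rule sum_lessThan_telescope')
    finally show ?thesis
      using S_0 S_N ij by simp
  qed
  with A show ?thesis
    by (intro eq_matI) auto
qed

lemma poly_mat_eval_char_poly_mult_add:
  assumes A: "A \<in> carrier_mat n n"
  shows "poly_mat_eval (char_poly A * Q + R) A = poly_mat_eval R A"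
  using A by (simp add: poly_mat_eval_add poly_mat_eval_mult cayley_hamilton)

lemma monic_division:
  fixes g :: "'a :: comm_ring_1 poly"
  assumes "monic g"
  obtains q r where "p = g * q + r" and "\<forall>k\<ge>degree g. coeff r k = 0"
proof -
  obtain q r where qr: "pseudo_divmod p g = (q, r)"
    by fastforce
  have "g \<noteq> 0"
    using assms by auto
  with qr assms have p: "p = g * q + r" and r: "r = 0 \<or> degree r < degree g"
    using pseudo_divmod[OF _ qr] by auto
  from r have "\<forall>k\<ge>degree g. coeff r k = 0"
    by (auto simp: coeff_eq_0)
  then show ?thesis
    by (rule that[OF p])
qed

lemma char_poly_division:
  assumes A: "A \<in> carrier_mat n n"
  obtains Q R where "p = char_poly A * Q + R" and "\<forall>k\<ge>n. coeff R k = 0"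
proof -
  have "monic (char_poly A)" and "degree (char_poly A) = n"
    using degree_monic_char_poly[OF A] by auto
  with that show ?thesis
    using monic_division[of "char_poly A" p] by metis
qed

lemma annihilates_mod_iff:
  assumes A: "A \<in> carrier_mat n n"
  shows "annihilates_mod q G A \<longleftrightarrow> (\<forall>i<n. \<forall>j<n. q dvd poly_mat_eval G A $$ (i, j))"
  using A unfolding annihilates_mod_def mat_cong_def by auto

lemma annihilates_mod_cong:
  assumes A: "A \<in> carrier_mat n n" and GH: "poly_cong q G H"
  shows "annihilates_mod q G A \<longleftrightarrow> annihilates_mod q H A"
proof -
  define N where "N = Suc (degree G + degree H)"
  have N: "\<forall>k\<ge>N. coeff G k = 0" "\<forall>k\<ge>N. coeff H k = 0"
    by (auto simp: N_def coeff_eq_0)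
  have "q dvd poly_mat_eval G A $$ (i, j) - poly_mat_eval H A $$ (i, j)" if ij: "i < n" "j < n" for i j
    unfolding poly_mat_eval_index[OF A ij N(1)] poly_mat_eval_index[OF A ij N(2)]
    using GH by (auto simp: poly_cong_def simp flip: sum_subtractf left_diff_distrib intro!: dvd_sum dvd_mult2)
  then show ?thesis
    unfolding annihilates_mod_iff[OF A] by (metis diff_add_cancel dvd_add_right_iff)
qed

lemma dvd_prod_diff:
  fixes f g :: "'b \<Rightarrow> 'a :: comm_ring_1"
  assumes "\<And>i. i \<in> S \<Longrightarrow> q dvd f i - g i"
  shows "q dvd prod f S - prod g S"
  using assms
proof (induction S rule: infinite_finite_induct)
  case (insert x S)
  have "prod f (insert x S) - prod g (insert x S) = f x * (prod f S - prod g S) + (f x - g x) * prod g S"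
    using insert.hyps by (simp add: algebra_simps)
  then show ?case
    using insert by (simp add: dvd_mult dvd_mult2)
qed simp_all

lemma mat_cong_det_dvd:
  assumes M: "M \<in> carrier_mat n n" and N: "N \<in> carrier_mat n n" and MN: "mat_cong q M N"
  shows "q dvd det M - det N"
proof -
  have "q dvd (\<Prod>i = 0..<n. M $$ (i, p i)) - (\<Prod>i = 0..<n. N $$ (i, p i))" if "p permutes {0..<n}" for p
    using MN M N permutes_in_image[OF that] by (intro dvd_prod_diff) (auto simp: mat_cong_def)
  then show ?thesis
    unfolding det_def'[OF M] det_def'[OF N]
    by (auto simp flip: sum_subtractf right_diff_distrib intro!: dvd_sum dvd_mult)
qed

lemma dvd_mult_mat_vec_index:
  fixes q :: "'a :: comm_ring_1"
  assumes "M \<in> carrier_mat nr n" and "w \<in> carrier_vec n" and "i < nr"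
    and "\<And>l. l < n \<Longrightarrow> q dvd M $$ (i, l) * w $ l"
  shows "q dvd (M *\<^sub>v w) $ i"
proof -
  have "(M *\<^sub>v w) $ i = (\<Sum>l<n. M $$ (i, l) * w $ l)"
    using assms by (simp add: scalar_prod_def atLeast0LessThan)
  also have "q dvd \<dots>"
    using assms by (intro dvd_sum) auto
  finally show ?thesis .
qed

lemma dvd_vec_index_if_det_unit:
  assumes M: "M \<in> carrier_mat n n" and unit: "det M dvd 1" and w: "w \<in> carrier_vec n"
    and Mw: "\<forall>l<n. q dvd (M *\<^sub>v w) $ l" and i: "i < n"
  shows "q dvd w $ i"
proof -
  have "adj_mat M *\<^sub>v (M *\<^sub>v w) = (adj_mat M * M) *\<^sub>v w"
    using M w by (simp add: assoc_mult_mat_vec[of _ n n _ n] adj_mat(1)[OF M])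
  also have "\<dots> = det M \<cdot>\<^sub>v w"
    using M w by (auto simp: adj_mat(3)[OF M] intro!: eq_vecI)
  finally have "q dvd det M * w $ i"
    using dvd_mult_mat_vec_index[OF adj_mat(1)[OF M] _ i, of "M *\<^sub>v w" q] M w Mw i
    by (simp add: dvd_mult)
  moreover obtain u where "det M * u = 1"
    using unit by (auto elim!: dvdE)
  then have "w $ i = u * (det M * w $ i)"
    by (metis mult.assoc mult.commute mult_1)
  ultimately show ?thesis
    by (metis dvd_mult)
qed

lemma local_unit_if_dvd_mult_diff_one:
  assumes loc: "local_with_max_ideal \<pi>" and d: "\<pi> dvd x * y - 1"
  shows "x dvd 1"
proof (rule ccontr)
  assume "\<not> x dvd 1"
  then have "\<pi> dvd x * y"
    using loc unfolding local_with_max_ideal_def by simp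
  then have "\<pi> dvd x * y - (x * y - 1)"
    using d by (rule dvd_diff)
  then have "\<pi> dvd 1"
    by simp
  with loc show False
    unfolding local_with_max_ideal_def by simp
qed

section \<open>Krylov matrices of cyclic vectors\<close>

definition krylov_mat :: "'a :: comm_ring_1 mat \<Rightarrow> 'a vec \<Rightarrow> 'a mat" where
  "krylov_mat A v = mat (dim_row A) (dim_row A) (\<lambda>(i, k). (A ^\<^sub>m k *\<^sub>v v) $ i)"

lemma krylov_mat_carrier [simp]: "A \<in> carrier_mat n n \<Longrightarrow> krylov_mat A v \<in> carrier_mat n n"
  unfolding krylov_mat_def by simp

lemma poly_mat_eval_mult_vec_krylov:
  assumes A: "A \<in> carrier_mat n n" and v: "v \<in> carrier_vec n" and R: "\<forall>k\<ge>n. coeff R k = 0"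
  shows "poly_mat_eval R A *\<^sub>v v = krylov_mat A v *\<^sub>v vec n (coeff R)"
proof (rule eq_vecI)
  fix i assume "i < dim_vec (krylov_mat A v *\<^sub>v vec n (coeff R))"
  then have i: "i < n"
    using A by (simp add: krylov_mat_def)
  have "(poly_mat_eval R A *\<^sub>v v) $ i = (\<Sum>m<n. (\<Sum>k<n. coeff R k * (A ^\<^sub>m k) $$ (i, m)) * v $ m)"
    using A v i by (simp add: scalar_prod_def atLeast0LessThan poly_mat_eval_index[OF A i _ R])
  also have "\<dots> = (\<Sum>k<n. \<Sum>m<n. coeff R k * (A ^\<^sub>m k) $$ (i, m) * v $ m)"
    by (simp add: sum_distrib_right) (rule sum.swap)
  also have "\<dots> = (\<Sum>k<n. (A ^\<^sub>m k *\<^sub>v v) $ i * coeff R k)"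
    using A v i by (intro sum.cong refl)
      (simp add: scalar_prod_def atLeast0LessThan sum_distrib_left ac_simps)
  also have "\<dots> = (krylov_mat A v *\<^sub>v vec n (coeff R)) $ i"
    using A i by (simp add: krylov_mat_def scalar_prod_def atLeast0LessThan)
  finally show "(poly_mat_eval R A *\<^sub>v v) $ i = (krylov_mat A v *\<^sub>v vec n (coeff R)) $ i" .
qed (use A in \<open>simp add: krylov_mat_def\<close>)

lemma cyclic_mod_krylov_det_unit:
  assumes A: "A \<in> carrier_mat n n" and loc: "local_with_max_ideal \<pi>" and cyc: "cyclic_mod \<pi> A"
  obtains v where "v \<in> carrier_vec n" and "det (krylov_mat A v) dvd 1"
proof -
  from cyc A obtain v where v: "v \<in> carrier_vec n"
    and spans: "\<forall>w\<in>carrier_vec n. \<exists>p. \<forall>i<n. \<pi> dvd (poly_mat_eval p A *\<^sub>v v) $ i - w $ i"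
    unfolding cyclic_mod_def by auto
  have "\<exists>R. (\<forall>k\<ge>n. coeff R k = 0) \<and> (\<forall>i<n. \<pi> dvd (poly_mat_eval R A *\<^sub>v v) $ i - unit_vec n t $ i)"
    for t
  proof -
    obtain p where p: "\<forall>i<n. \<pi> dvd (poly_mat_eval p A *\<^sub>v v) $ i - unit_vec n t $ i"
      using spans unit_vec_carrier by blast
    obtain Q R where "p = char_poly A * Q + R" and "\<forall>k\<ge>n. coeff R k = 0"
      using char_poly_division[OF A] by metis
    with p show ?thesis
      using poly_mat_eval_char_poly_mult_add[OF A] by metis
  qed
  then obtain R where R: "\<And>t. \<forall>k\<ge>n. coeff (R t) k = 0"
    and R_unit: "\<And>t i. i < n \<Longrightarrow> \<pi> dvd (poly_mat_eval (R t) A *\<^sub>v v) $ i - unit_vec n t $ i"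
    by metis
  define K where "K = krylov_mat A v"
  define C where "C = mat n n (\<lambda>(k, t). coeff (R t) k)"
  have K: "K \<in> carrier_mat n n" and C: "C \<in> carrier_mat n n"
    using A by (simp_all add: K_def C_def)
  have KC: "(K * C) $$ (i, t) = (poly_mat_eval (R t) A *\<^sub>v v) $ i" if "i < n" "t < n" for i t
    using K C that by (simp add: poly_mat_eval_mult_vec_krylov[OF A v R] K_def C_def col_mat)
  have "\<pi> dvd (K * C) $$ (i, t) - 1\<^sub>m n $$ (i, t)" if "i < n" "t < n" for i t
    using R_unit[OF that(1), of t] KC[OF that] that by (simp add: unit_vec_def)
  then have "mat_cong \<pi> (K * C) (1\<^sub>m n)"
    using K C unfolding mat_cong_def by auto
  then have "\<pi> dvd det K * det C - 1"
    using mat_cong_det_dvd[OF mult_carrier_mat[OF K C] one_carrier_mat] det_mult[OF K C] by simp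
  then show ?thesis
    using that v local_unit_if_dvd_mult_diff_one[OF loc] unfolding K_def by blast
qed

section \<open>The null ideal modulo \<open>q\<close>\<close>

lemma low_degree_annihilator_coeff_dvd:
  assumes A: "A \<in> carrier_mat n n" and loc: "local_with_max_ideal \<pi>" and cyc: "cyclic_mod \<pi> A"
    and R: "\<forall>k\<ge>n. coeff R k = 0" and ann: "annihilates_mod q R A"
  shows "q dvd coeff R k"
proof (cases "k < n")
  case True
  obtain v where v: "v \<in> carrier_vec n" and unit: "det (krylov_mat A v) dvd 1"
    using cyclic_mod_krylov_det_unit[OF A loc cyc] .
  have "\<forall>i<n. q dvd (poly_mat_eval R A *\<^sub>v v) $ i"
    using ann v unfolding annihilates_mod_iff[OF A]
    by (auto intro!: dvd_mult_mat_vec_index[OF poly_mat_eval_carrier[OF A]] dvd_mult2)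
  then have "q dvd vec n (coeff R) $ k"
    unfolding poly_mat_eval_mult_vec_krylov[OF A v R]
    using dvd_vec_index_if_det_unit[OF krylov_mat_carrier[OF A] unit _ _ True] by simp
  with True show ?thesis
    by simp
qed (use R in simp)

lemma annihilates_mod_char_poly:
  "A \<in> carrier_mat n n \<Longrightarrow> annihilates_mod q (char_poly A) A"
  by (simp add: annihilates_mod_iff cayley_hamilton)

lemma annihilates_mod_iff_cong_char_poly_mult:
  assumes A: "A \<in> carrier_mat n n" and loc: "local_with_max_ideal \<pi>" and cyc: "cyclic_mod \<pi> A"
  shows "annihilates_mod q G A \<longleftrightarrow> (\<exists>H. poly_cong q G (char_poly A * H))"
proof
  assume ann: "annihilates_mod q G A"
  obtain Q R where G: "G = char_poly A * Q + R" and R: "\<forall>k\<ge>n. coeff R k = 0"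
    using char_poly_division[OF A] .
  have "annihilates_mod q R A"
    using ann by (simp add: G annihilates_mod_def poly_mat_eval_char_poly_mult_add[OF A])
  then have "poly_cong q G (char_poly A * Q)"
    using low_degree_annihilator_coeff_dvd[OF A loc cyc R] by (simp add: G poly_cong_def)
  then show "\<exists>H. poly_cong q G (char_poly A * H)" ..
next
  assume "\<exists>H. poly_cong q G (char_poly A * H)"
  then obtain H where "poly_cong q G (char_poly A * H)" ..
  moreover have "annihilates_mod q (char_poly A * H) A"
    using A by (simp add: annihilates_mod_iff poly_mat_eval_mult cayley_hamilton)
  ultimately show "annihilates_mod q G A"
    using annihilates_mod_cong[OF A] by simp
qed

lemma monic_annihilator_degree_ge:
  assumes A: "A \<in> carrier_mat n n" and loc: "local_with_max_ideal \<pi>" and cyc: "cyclic_mod \<pi> A"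
    and q: "\<not> q dvd 1" and G: "monic G" and ann: "annihilates_mod q G A"
  shows "n \<le> degree G"
proof (rule ccontr)
  assume "\<not> n \<le> degree G"
  then have "\<forall>k\<ge>n. coeff G k = 0"
    by (auto simp: coeff_eq_0)
  then have "q dvd lead_coeff G"
    using low_degree_annihilator_coeff_dvd[OF A loc cyc _ ann] by blast
  with G q show False
    by simp
qed

lemma monic_annihilator_degree_eq_cong_char_poly:
  assumes A: "A \<in> carrier_mat n n" and loc: "local_with_max_ideal \<pi>" and cyc: "cyclic_mod \<pi> A"
    and G: "monic G" "degree G = n" and ann: "annihilates_mod q G A"
  shows "poly_cong q G (char_poly A)"
proof -
  have \<chi>: "monic (char_poly A)" "degree (char_poly A) = n"
    using degree_monic_char_poly[OF A] by auto
  have low: "\<forall>k\<ge>n. coeff (G - char_poly A) k = 0"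
    using G \<chi> by (auto simp: coeff_eq_0 le_less)
  have "annihilates_mod q (char_poly A * 1 + (G - char_poly A)) A"
    using ann by simp
  then have "annihilates_mod q (G - char_poly A) A"
    by (simp only: annihilates_mod_def poly_mat_eval_char_poly_mult_add[OF A])
  then show ?thesis
    using low_degree_annihilator_coeff_dvd[OF A loc cyc low] by (simp add: poly_cong_def)
qed

theorem corollary2p3:
  fixes \<pi> :: "'a :: comm_ring_1" and A :: "'a mat" and n :: nat
  assumes pir: "principal_ideal_ring TYPE('a)"
    and loc: "local_with_max_ideal \<pi>"
    and compl: "adically_complete \<pi>"
    and char: "\<not> \<pi> dvd 2"
    and A: "A \<in> carrier_mat n n"
    and GL: "det A dvd 1"
    and cyc: "cyclic_mod \<pi> A"
  shows "\<forall>j::nat.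
     (\<forall>G :: 'a poly. annihilates_mod (\<pi> ^ (j + 1)) G A \<longleftrightarrow>
         (\<exists>H. poly_cong (\<pi> ^ (j + 1)) G (char_poly A * H)))
   \<and> monic (char_poly A) \<and> degree (char_poly A) = n
   \<and> annihilates_mod (\<pi> ^ (j + 1)) (char_poly A) A
   \<and> (\<forall>G :: 'a poly. monic G \<and> annihilates_mod (\<pi> ^ (j + 1)) G A \<longrightarrow> n \<le> degree G)
   \<and> (\<forall>G :: 'a poly. monic G \<and> degree G = n \<and> annihilates_mod (\<pi> ^ (j + 1)) G A
          \<longrightarrow> poly_cong (\<pi> ^ (j + 1)) G (char_poly A))"
proof (intro allI conjI)
  fix j :: nat
  have non_unit: "\<not> \<pi> ^ (j + 1) dvd 1"
  proof
    assume "\<pi> ^ (j + 1) dvd 1"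
    then have "\<pi> dvd 1"
      using dvd_trans[of \<pi> "\<pi> ^ (j + 1)" 1] by simp
    with loc show False
      unfolding local_with_max_ideal_def by simp
  qed
  show "annihilates_mod (\<pi> ^ (j + 1)) G A \<longleftrightarrow> (\<exists>H. poly_cong (\<pi> ^ (j + 1)) G (char_poly A * H))"
    for G by (rule annihilates_mod_iff_cong_char_poly_mult[OF A loc cyc])
  show "monic (char_poly A)" and "degree (char_poly A) = n"
    using degree_monic_char_poly[OF A] by auto
  show "annihilates_mod (\<pi> ^ (j + 1)) (char_poly A) A"
    by (rule annihilates_mod_char_poly[OF A])
  show "monic G \<and> annihilates_mod (\<pi> ^ (j + 1)) G A \<longrightarrow> n \<le> degree G" for G
    using monic_annihilator_degree_ge[OF A loc cyc non_unit] by blast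
  show "monic G \<and> degree G = n \<and> annihilates_mod (\<pi> ^ (j + 1)) G A
      \<longrightarrow> poly_cong (\<pi> ^ (j + 1)) G (char_poly A)" for G
    using monic_annihilator_degree_eq_cong_char_poly[OF A loc cyc] by blast
qed

end
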